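(* Let $V$ be a finite-dimensional super vector space over a field of characteristic $0$, let $W\subseteq V$ be a graded subspace, $D=W^0=\{X\in\mathfrak{gl}(V):X(w)=0\ \forall w\in W\}$ (so that $D^0=W$), and let $\pi:V\to\mathfrak{gl}(V)$ be an even, super skew-symmetric linear map; write $\pi(x,y)=\pi(x)(y)$. Let $L=\{X+\pi(x)+x: X\in D,\ x\in D^0\}\subseteq\mathfrak{gl}(V)\oplus V$. Then $L$ is a Dirac structure if and only if: (1) $D$ is a Lie sub-superalgebra of $\mathfrak{gl}(V)$; (2) $\pi(\pi(x,y))-[\pi(x),\pi(y)]\in D$ for all $x,y\in D^0$; (3) $\pi(x,y)\in D^0$ for all $x,y\in D^0$.
   Context: $\mathfrak{gl}(V)$: linear endomorphisms of $V$ with natural $\mathbb{Z}_2$-grading and supercommutator $[A,B]=AB-(-1)^{|A||B|}BA$. $\mathcal{E}=\mathfrak{gl}(V)\oplus V$ graded by $\mathcal{E}_\alpha=\mathfrak{gl}(V)_\alpha\oplus V_\alpha$, homogeneous elements $A+x$ with $|A|=|x|$. Bracket: $[\![A+x,B+y]\!]=[A,B]+\tfrac12(Ay-(-1)^{|x||y|}Bx)$; $V$-valued pairing: $\langle A+x,B+y\rangle=\tfrac12(Ay+(-1)^{|x||y|}Bx)$. $F^\perp=\{e:\langle e,f\rangle=0\ \forall f\in F\}$. For $D\subseteq\mathfrak{gl}(V)$, $D^0=\{x\in V: X(x)=0\ \forall X\in D\}$. Super skew-symmetric: $\pi(x)(y)=-(-1)^{|x||y|}\pi(y)(x)$ for homogeneous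 $x,y$. A Dirac structure is a graded subspace $L\subseteq\mathcal{E}$ with $L=L^\perp$ and $[\![L,L]\!]\subseteq L$. *)

theory Defs
  imports "HOL-Analysis.Finite_Cartesian_Product"
begin

text \<open>A finite-dimensional super vector space V over a field 'a is modelled as
  'a^'n with a homogeneous basis indexed by the finite type 'n; the parity of the
  basis vector e_i is p i (True = odd). gl(V) is modelled as 'a^'n^'n.\<close>

definition vproj :: "('n \<Rightarrow> bool) \<Rightarrow> bool \<Rightarrow> 'a::zero^'n \<Rightarrow> 'a^'n" where
  "vproj p d x = (\<chi> i. if p i = d then x$i else 0)"

definition mproj :: "('n \<Rightarrow> bool) \<Rightarrow> bool \<Rightarrow> 'a::zero^'n^'n \<Rightarrow> 'a^'n^'n" where
  "mproj p d A = (\<chi> i j. if (p i \<noteq> p j) = d then A$i$j else 0)"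

definition hvec :: "('n \<Rightarrow> bool) \<Rightarrow> bool \<Rightarrow> 'a::zero^'n \<Rightarrow> bool" where
  "hvec p d x \<longleftrightarrow> vproj p d x = x"

definition hmat :: "('n \<Rightarrow> bool) \<Rightarrow> bool \<Rightarrow> 'a::zero^'n^'n \<Rightarrow> bool" where
  "hmat p d A \<longleftrightarrow> mproj p d A = A"

definition ssign :: "bool \<Rightarrow> bool \<Rightarrow> 'a::ring_1" where
  "ssign d e = (if d \<and> e then -1 else 1)"

definition mscale :: "'a::times \<Rightarrow> 'a^'n^'n \<Rightarrow> 'a^'n^'n" where
  "mscale c A = (\<chi> i j. c * A$i$j)"

text \<open>Supercommutator, extended bilinearly from homogeneous elements.\<close>
definition scomm :: "('n::finite \<Rightarrow> bool) \<Rightarrow> 'a::comm_ring_1^'n^'n \<Rightarrow> 'a^'n^'n \<Rightarrow> 'a^'n^'n" where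
  "scomm p A B = (\<Sum>d\<in>UNIV. \<Sum>e\<in>UNIV.
      mproj p d A ** mproj p e B - mscale (ssign d e) (mproj p e B ** mproj p d A))"

definition gsubspace_v :: "('n \<Rightarrow> bool) \<Rightarrow> ('a::field^'n) set \<Rightarrow> bool" where
  "gsubspace_v p W \<longleftrightarrow> 0 \<in> W \<and> (\<forall>x\<in>W. \<forall>y\<in>W. x + y \<in> W) \<and> (\<forall>c. \<forall>x\<in>W. c *s x \<in> W)
     \<and> (\<forall>d. \<forall>x\<in>W. vproj p d x \<in> W)"

definition gsubspace_m :: "('n::finite \<Rightarrow> bool) \<Rightarrow> ('a::field^'n^'n) set \<Rightarrow> bool" where
  "gsubspace_m p S \<longleftrightarrow> 0 \<in> S \<and> (\<forall>x\<in>S. \<forall>y\<in>S. x + y \<in> S) \<and> (\<forall>c. \<forall>x\<in>S. mscale c x \<in> S)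
     \<and> (\<forall>d. \<forall>x\<in>S. mproj p d x \<in> S)"

definition lie_subsuperalg :: "('n::finite \<Rightarrow> bool) \<Rightarrow> ('a::field^'n^'n) set \<Rightarrow> bool" where
  "lie_subsuperalg p S \<longleftrightarrow> gsubspace_m p S \<and> (\<forall>A\<in>S. \<forall>B\<in>S. scomm p A B \<in> S)"

type_synonym ('a, 'n) E = "('a^'n^'n) \<times> ('a^'n)"

definition gsubspace_E :: "('n::finite \<Rightarrow> bool) \<Rightarrow> ('a::field, 'n) E set \<Rightarrow> bool" where
  "gsubspace_E p S \<longleftrightarrow> (0, 0) \<in> S
     \<and> (\<forall>A x B y. (A, x) \<in> S \<longrightarrow> (B, y) \<in> S \<longrightarrow> (A + B, x + y) \<in> S)
     \<and> (\<forall>c A x. (A, x) \<in> S \<longrightarrow> (mscale c A, c *s x) \<in> S)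
     \<and> (\<forall>d A x. (A, x) \<in> S \<longrightarrow> (mproj p d A, vproj p d x) \<in> S)"

text \<open>Bracket and V-valued pairing on E, extended bilinearly from homogeneous
  elements; the degree-d component of A + x is (mproj p d A, vproj p d x).\<close>
definition ebracket :: "('n::finite \<Rightarrow> bool) \<Rightarrow> ('a::field, 'n) E \<Rightarrow> ('a, 'n) E \<Rightarrow> ('a, 'n) E" where
  "ebracket p e f = (case e of (A, x) \<Rightarrow> case f of (B, y) \<Rightarrow>
     (scomm p A B,
      \<Sum>d\<in>UNIV. \<Sum>d'\<in>UNIV. (1/2) *s (mproj p d A *v vproj p d' y
           - ssign d d' *s (mproj p d' B *v vproj p d x))))"

definition epair :: "('n::finite \<Rightarrow> bool) \<Rightarrow> ('a::field, 'n) E \<Rightarrow> ('a, 'n) E \<Rightarrow> 'a^'n" where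
  "epair p e f = (case e of (A, x) \<Rightarrow> case f of (B, y) \<Rightarrow>
     (\<Sum>d\<in>UNIV. \<Sum>d'\<in>UNIV. (1/2) *s (mproj p d A *v vproj p d' y
           + ssign d d' *s (mproj p d' B *v vproj p d x))))"

definition eperp :: "('n::finite \<Rightarrow> bool) \<Rightarrow> ('a::field, 'n) E set \<Rightarrow> ('a, 'n) E set" where
  "eperp p F = {e. \<forall>f\<in>F. epair p e f = 0}"

definition dirac :: "('n::finite \<Rightarrow> bool) \<Rightarrow> ('a::field, 'n) E set \<Rightarrow> bool" where
  "dirac p L \<longleftrightarrow> gsubspace_E p L \<and> L = eperp p L \<and> (\<forall>e\<in>L. \<forall>f\<in>L. ebracket p e f \<in> L)"

definition ann_mat :: "('a::semiring_1^'n::finite) set \<Rightarrow> ('a^'n^'n) set" where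
  "ann_mat W = {X. \<forall>w\<in>W. X *v w = 0}"

definition ann_vec :: "('a::semiring_1^'n::finite^'n) set \<Rightarrow> ('a^'n) set" where
  "ann_vec D = {x. \<forall>X\<in>D. X *v x = 0}"

end

theory Submission
  imports Defs
begin

text \<open>
  The annihilator \<open>D = W^0\<close> of a graded subspace is a left ideal of gl(V) stable under the
  grading, so it is always a Lie sub-superalgebra, and \<open>W \<subseteq> D^0\<close>.
  The pairing of \<open>X + \<pi> x + x\<close> and \<open>Y + \<pi> y + y\<close> in \<open>L\<close> is
  \<open>1/2 (\<pi>(x, y) + (-1)^(|x||y|) \<pi>(y, x)) = 0\<close>, since \<open>D\<close> kills \<open>D^0\<close>. Conversely, if \<open>B + y\<close> is
  orthogonal to \<open>L\<close>, pairing with \<open>X \<in> D\<close> forces \<open>y \<in> D^0\<close>, and pairing with \<open>\<pi> w + w\<close> for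
  \<open>w \<in> W\<close> forces \<open>B - \<pi> y \<in> D\<close>; so \<open>L = L^\<bottom>\<close> always holds. The bracket of two elements of \<open>L\<close>
  is \<open>[X + \<pi> x, Y + \<pi> y] + \<pi>(x, y)\<close>, so closedness amounts to (2) and (3): the cross terms
  \<open>[X, \<pi> y]\<close> lie in \<open>D\<close> because, by (3), \<open>\<pi> y\<close> maps \<open>W \<subseteq> D^0\<close> into \<open>D^0\<close>.
\<close>

lemma vproj_nth: "vproj p d x $ i = (if p i = d then x $ i else 0)"
  by (simp add: vproj_def)

lemma mproj_nth: "mproj p d A $ i $ j = (if (p i \<noteq> p j) = d then A $ i $ j else 0)"
  by (simp add: mproj_def)

lemma vproj_diff: "vproj p d (x - y) = vproj p d x - vproj p d (y::'a::comm_ring_1^'n)"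
  by (simp add: vproj_def vec_eq_iff)

lemma vproj_zero [simp]: "vproj p d 0 = (0::'a::comm_ring_1^'n)"
  by (simp add: vproj_def vec_eq_iff)

lemma vproj_vproj: "vproj p c (vproj p d x) = (if c = d then vproj p d x else (0::'a::comm_ring_1^'n))"
  by (simp add: vproj_def vec_eq_iff)

lemma vproj_True_add_False: "vproj p True x + vproj p False x = (x::'a::comm_ring_1^'n)"
  by (simp add: vproj_def vec_eq_iff)

lemma mproj_add: "mproj p d (A + B) = mproj p d A + mproj p d (B::'a::comm_ring_1^'n^'n)"
  by (simp add: mproj_def vec_eq_iff)

lemma mproj_diff: "mproj p d (A - B) = mproj p d A - mproj p d (B::'a::comm_ring_1^'n^'n)"
  by (simp add: mproj_def vec_eq_iff)

lemma mproj_mproj: "mproj p c (mproj p d A) = (if c = d then mproj p d A else (0::'a::comm_ring_1^'n^'n))"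
  by (simp add: mproj_def vec_eq_iff)

lemma mproj_True_add_False: "mproj p True A + mproj p False A = (A::'a::comm_ring_1^'n^'n)"
  by (simp add: mproj_def vec_eq_iff)

lemma mscale_add: "mscale c (A + B) = mscale c A + mscale c (B::'a::comm_ring_1^'n^'n)"
  by (simp add: mscale_def vec_eq_iff algebra_simps)

lemma mscale_diff: "mscale c (A - B) = mscale c A - mscale c (B::'a::comm_ring_1^'n^'n)"
  by (simp add: mscale_def vec_eq_iff algebra_simps)

lemma mscale_matrix_vector_mult: "mscale c A *v x = c *s (A *v (x::'a::comm_ring_1^'n::finite))"
  by (simp add: mscale_def vec_eq_iff matrix_vector_mult_def sum_distrib_left algebra_simps)

lemma matrix_mult_add_rdistrib: "((A::'a::semiring_1^'n^'m) + B) ** C = A ** C + B ** C"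
  by (vector matrix_matrix_mult_def sum.distrib distrib_right)

lemma mproj_mult_vproj:
  "mproj p d A *v vproj p e x = vproj p (d \<noteq> e) (A *v vproj p e (x::'a::comm_ring_1^'n::finite))"
  unfolding vec_eq_iff matrix_vector_mult_def
  by (auto simp: vproj_nth mproj_nth intro!: sum.cong sum.neutral split: if_splits)

lemma vproj_mproj_mult:
  "vproj p c (mproj p d A *v x) = mproj p d A *v vproj p (c \<noteq> d) (x::'a::comm_ring_1^'n::finite)"
  unfolding vec_eq_iff matrix_vector_mult_def
  by (auto simp: vproj_nth mproj_nth intro!: sum.cong sum.neutral split: if_splits)

lemma matrix_vector_mult_homogeneous_parts:
  "(A::'a::comm_ring_1^'n::finite^'n) *v y = (\<Sum>d\<in>UNIV. \<Sum>d'\<in>UNIV. mproj p d A *v vproj p d' y)"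
proof -
  have "A *v y = (mproj p True A + mproj p False A) *v (vproj p True y + vproj p False y)"
    by (simp add: mproj_True_add_False vproj_True_add_False)
  thus ?thesis by (simp add: UNIV_bool algebra_simps)
qed

lemma scomm_add_left: "scomm p (A + A') B = scomm p A B + scomm p A' (B::'a::comm_ring_1^'n::finite^'n)"
  unfolding scomm_def
  by (simp add: UNIV_bool mproj_add matrix_mult_add_rdistrib matrix_add_ldistrib mscale_add algebra_simps)

lemma scomm_add_right: "scomm p A (B + B') = scomm p A B + scomm p A (B'::'a::comm_ring_1^'n::finite^'n)"
  unfolding scomm_def
  by (simp add: UNIV_bool mproj_add matrix_mult_add_rdistrib matrix_add_ldistrib mscale_add algebra_simps)

text \<open>\<open>(-1)^(|B||x|) B x\<close>, extended bilinearly: the second term of both the pairing and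
  the bracket on \<open>E\<close>.\<close>

definition twisted_apply :: "('n::finite \<Rightarrow> bool) \<Rightarrow> 'a::comm_ring_1^'n^'n \<Rightarrow> 'a^'n \<Rightarrow> 'a^'n" where
  "twisted_apply p B x = (\<Sum>d\<in>UNIV. \<Sum>d'\<in>UNIV. ssign d d' *s (mproj p d' B *v vproj p d x))"

lemma twisted_apply_add:
  "twisted_apply p (A + B) x = twisted_apply p A x + twisted_apply p B (x::'a::comm_ring_1^'n::finite)"
  unfolding twisted_apply_def by (simp add: UNIV_bool mproj_add vector_add_ldistrib algebra_simps)

lemma epair_Pair: "epair p (A, x) (B, y) = (1/2::'a::field) *s (A *v y + twisted_apply p B x)"
  unfolding epair_def twisted_apply_def matrix_vector_mult_homogeneous_parts[of A y p]
  by (simp add: UNIV_bool vector_add_ldistrib algebra_simps)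

lemma ebracket_Pair:
  "ebracket p (A, x) (B, y) = (scomm p A B, (1/2::'a::field) *s (A *v y - twisted_apply p B x))"
  unfolding ebracket_def twisted_apply_def matrix_vector_mult_homogeneous_parts[of A y p]
  by (simp add: UNIV_bool vector_add_ldistrib vector_ssub_ldistrib algebra_simps)

text \<open>The even part of \<open>X\<close> contributes \<open>X\<^sub>0 y\<close>, the odd part \<open>X\<^sub>1 y\<^sub>0 - X\<^sub>1 y\<^sub>1\<close>; the two
  terms of the latter have different degrees, so each vanishes separately.\<close>

lemma matrix_vector_mult_eq_0_if_twisted_apply_mproj:
  assumes "\<And>e. twisted_apply p (mproj p e X) y = 0"
  shows "X *v (y::'a::comm_ring_1^'n::finite) = 0"
proof -
  have even: "mproj p False X *v vproj p True y + mproj p False X *v vproj p False y = 0"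
    using assms[of False] unfolding twisted_apply_def
    by (simp add: UNIV_bool mproj_mproj ssign_def add.commute)
  have odd: "mproj p True X *v vproj p False y - mproj p True X *v vproj p True y = 0"
    using assms[of True] unfolding twisted_apply_def
    by (simp add: UNIV_bool mproj_mproj ssign_def vector_smult_lneg)
  have "vproj p False (mproj p True X *v vproj p False y - mproj p True X *v vproj p True y) = 0"
    using odd by simp
  hence odd_odd: "mproj p True X *v vproj p True y = 0"
    by (simp add: vproj_diff vproj_mproj_mult vproj_vproj)
  with odd have odd_even: "mproj p True X *v vproj p False y = 0" by simp
  have "X *v y = (mproj p True X + mproj p False X) *v (vproj p True y + vproj p False y)"
    by (simp add: mproj_True_add_False vproj_True_add_False)
  also have "\<dots> = 0" using even odd_odd odd_even by (simp add: algebra_simps)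
  finally show ?thesis .
qed

lemma ann_mat_zero: "0 \<in> ann_mat W"
  by (simp add: ann_mat_def)

lemma ann_mat_add: "X \<in> ann_mat W \<Longrightarrow> Y \<in> ann_mat W \<Longrightarrow> X + Y \<in> ann_mat W"
  by (simp add: ann_mat_def matrix_vector_mult_add_rdistrib)

lemma ann_mat_diff:
  "X \<in> ann_mat W \<Longrightarrow> Y \<in> ann_mat W \<Longrightarrow> X - Y \<in> ann_mat (W::('a::comm_ring_1^'n::finite) set)"
  by (simp add: ann_mat_def matrix_vector_mult_diff_rdistrib)

lemma ann_mat_uminus: "X \<in> ann_mat W \<Longrightarrow> - X \<in> ann_mat (W::('a::comm_ring_1^'n::finite) set)"
  using ann_mat_diff[OF ann_mat_zero] by fastforce

lemma ann_mat_mscale: "X \<in> ann_mat W \<Longrightarrow> mscale c X \<in> ann_mat (W::('a::comm_ring_1^'n::finite) set)"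
  by (simp add: ann_mat_def mscale_matrix_vector_mult)

lemma ann_mat_mult_left: "Y \<in> ann_mat W \<Longrightarrow> M ** Y \<in> ann_mat (W::('a::comm_ring_1^'n::finite) set)"
  by (simp add: ann_mat_def matrix_vector_mul_assoc[symmetric])

lemma ann_mat_mproj:
  assumes W_vproj: "\<And>w d. w \<in> W \<Longrightarrow> vproj p d w \<in> W"
    and X: "X \<in> ann_mat W"
  shows "mproj p d X \<in> ann_mat (W::('a::comm_ring_1^'n::finite) set)"
proof -
  have "mproj p d X *v w = 0" if w: "w \<in> W" for w
  proof -
    have "mproj p d X *v w = mproj p d X *v (vproj p True w + vproj p False w)"
      by (simp add: vproj_True_add_False)
    also have "\<dots> = vproj p (d \<noteq> True) (X *v vproj p True w) + vproj p (d \<noteq> False) (X *v vproj p False w)"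
      by (simp add: matrix_vector_right_distrib mproj_mult_vproj)
    also have "\<dots> = 0" using X W_vproj[OF w] by (simp add: ann_mat_def)
    finally show ?thesis .
  qed
  thus ?thesis by (simp add: ann_mat_def)
qed

lemma scomm_mem_ann_mat:
  assumes "\<And>d e. mproj p d A ** mproj p e B \<in> ann_mat W"
    and "\<And>d e. mproj p e B ** mproj p d A \<in> ann_mat W"
  shows "scomm p A B \<in> ann_mat (W::('a::comm_ring_1^'n::finite) set)"
  unfolding scomm_def using assms by (simp add: UNIV_bool ann_mat_add ann_mat_diff ann_mat_mscale)

lemma lie_subsuperalg_ann_mat:
  assumes "\<And>w d. w \<in> W \<Longrightarrow> vproj p d w \<in> W"
  shows "lie_subsuperalg p (ann_mat W)"
  unfolding lie_subsuperalg_def gsubspace_m_def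
  using assms by (auto intro!: scomm_mem_ann_mat ann_mat_mult_left ann_mat_mproj
      simp: ann_mat_zero ann_mat_add ann_mat_mscale)

lemma ann_vec_zero: "0 \<in> ann_vec D"
  by (simp add: ann_vec_def)

lemma ann_vec_add: "x \<in> ann_vec D \<Longrightarrow> y \<in> ann_vec D \<Longrightarrow> x + y \<in> ann_vec D"
  by (simp add: ann_vec_def matrix_vector_right_distrib)

lemma ann_vec_scale: "x \<in> ann_vec D \<Longrightarrow> c *s x \<in> ann_vec (D::('a::field^'n::finite^'n) set)"
  by (simp add: ann_vec_def vector_scalar_commute)

lemma subset_ann_vec_ann_mat: "W \<subseteq> ann_vec (ann_mat W)"
  by (auto simp: ann_vec_def ann_mat_def)

lemma ann_vec_vproj:
  assumes D_mproj: "\<And>X d. X \<in> D \<Longrightarrow> mproj p d X \<in> D"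
    and y: "y \<in> ann_vec D"
  shows "vproj p e y \<in> ann_vec (D::('a::comm_ring_1^'n::finite^'n) set)"
proof -
  have "X *v vproj p e y = 0" if X: "X \<in> D" for X
  proof -
    have "mproj p d X *v vproj p e y = 0" for d
    proof -
      have "mproj p d X *v vproj p e y = vproj p (e \<noteq> d) (mproj p d X *v y)"
        by (cases d; cases e) (simp_all add: vproj_mproj_mult)
      thus ?thesis using y D_mproj[OF X] by (simp add: ann_vec_def)
    qed
    thus ?thesis
      by (metis add.right_neutral matrix_vector_mult_add_rdistrib mproj_True_add_False)
  qed
  thus ?thesis by (simp add: ann_vec_def)
qed

lemma twisted_apply_eq_0:
  assumes "\<And>X d. X \<in> D \<Longrightarrow> mproj p d X \<in> D"
    and "X \<in> D" and "x \<in> ann_vec D"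
  shows "twisted_apply p X (x::'a::comm_ring_1^'n::finite) = 0"
  unfolding twisted_apply_def using assms ann_vec_vproj[OF assms(1)] by (simp add: ann_vec_def)

locale super_skew_map =
  fixes p :: "'n::finite \<Rightarrow> bool"
    and \<pi> :: "'a::field^'n \<Rightarrow> 'a^'n^'n"
  assumes \<pi>_add: "\<And>x y. \<pi> (x + y) = \<pi> x + \<pi> y"
    and \<pi>_scale: "\<And>c x. \<pi> (c *s x) = mscale c (\<pi> x)"
    and \<pi>_even: "\<And>d x. hvec p d x \<Longrightarrow> hmat p d (\<pi> x)"
    and \<pi>_skew: "\<And>d e x y. hvec p d x \<Longrightarrow> hvec p e y \<Longrightarrow>
                   \<pi> x *v y = - (ssign d e *s (\<pi> y *v x))"
begin

lemma \<pi>_zero [simp]: "\<pi> 0 = 0"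
  using \<pi>_add[of 0 0] by simp

lemma mproj_\<pi>: "mproj p d (\<pi> x) = \<pi> (vproj p d x)"
proof -
  have homogeneous: "mproj p e (\<pi> (vproj p c x)) = (if e = c then \<pi> (vproj p c x) else 0)" for c e
  proof -
    have "hmat p c (\<pi> (vproj p c x))"
      by (rule \<pi>_even) (simp add: hvec_def vproj_vproj)
    hence "mproj p c (\<pi> (vproj p c x)) = \<pi> (vproj p c x)" by (simp add: hmat_def)
    thus ?thesis by (metis mproj_mproj)
  qed
  have "\<pi> x = \<pi> (vproj p True x) + \<pi> (vproj p False x)"
    by (simp add: \<pi>_add[symmetric] vproj_True_add_False)
  hence "mproj p d (\<pi> x) = mproj p d (\<pi> (vproj p True x)) + mproj p d (\<pi> (vproj p False x))"
    by (simp add: mproj_add)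
  thus ?thesis using homogeneous by (cases d) auto
qed

lemma twisted_apply_\<pi>: "twisted_apply p (\<pi> y) x = - (\<pi> x *v y)"
proof -
  have skew: "ssign d e *s (\<pi> (vproj p e y) *v vproj p d x) = - (\<pi> (vproj p d x) *v vproj p e y)" for d e
    using \<pi>_skew[of d "vproj p d x" e "vproj p e y"] by (simp add: hvec_def vproj_vproj)
  have "\<pi> x *v y = (\<Sum>d\<in>UNIV. \<Sum>d'\<in>UNIV. \<pi> (vproj p d x) *v vproj p d' y)"
    using matrix_vector_mult_homogeneous_parts[of "\<pi> x" y p] by (simp add: mproj_\<pi>)
  moreover have "twisted_apply p (\<pi> y) x = (\<Sum>d\<in>UNIV. \<Sum>d'\<in>UNIV. - (\<pi> (vproj p d x) *v vproj p d' y))"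
    unfolding twisted_apply_def by (simp only: mproj_\<pi> skew)
  ultimately show ?thesis by (simp add: sum_negf)
qed

end

locale twisted_graph = super_skew_map p \<pi> for p :: "'n::finite \<Rightarrow> bool" and \<pi> :: "'a::field_char_0^'n \<Rightarrow> 'a^'n^'n" +
  fixes W :: "('a^'n) set"
    and D :: "('a^'n^'n) set"
    and L :: "('a, 'n) E set"
  assumes W_vproj: "\<And>w d. w \<in> W \<Longrightarrow> vproj p d w \<in> W"
    and D_def: "D = ann_mat W"
    and L_def: "L = {(X + \<pi> x, x) | X x. X \<in> D \<and> x \<in> ann_vec D}"
begin

lemma D_mproj: "X \<in> D \<Longrightarrow> mproj p d X \<in> D"
  unfolding D_def using W_vproj by (rule ann_mat_mproj)

lemma mem_L_iff: "(A, z) \<in> L \<longleftrightarrow> z \<in> ann_vec D \<and> A - \<pi> z \<in> D"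
proof
  assume "(A, z) \<in> L"
  thus "z \<in> ann_vec D \<and> A - \<pi> z \<in> D" unfolding L_def by auto
next
  assume "z \<in> ann_vec D \<and> A - \<pi> z \<in> D"
  moreover have "(A, z) = ((A - \<pi> z) + \<pi> z, z)" by simp
  ultimately show "(A, z) \<in> L" unfolding L_def by blast
qed

lemma graph_mem_L: "x \<in> ann_vec D \<Longrightarrow> (\<pi> x, x) \<in> L"
  by (simp add: mem_L_iff D_def ann_mat_zero)

lemma L_pairing_terms:
  assumes "(A, x) \<in> L" and "(B, y) \<in> L"
  shows "A *v y = \<pi> x *v y" and "twisted_apply p B x = - (\<pi> x *v y)"
proof -
  have x: "x \<in> ann_vec D" "A - \<pi> x \<in> D" and y: "y \<in> ann_vec D" "B - \<pi> y \<in> D"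
    using assms by (auto simp: mem_L_iff)
  have "A *v y = (A - \<pi> x) *v y + \<pi> x *v y" by (simp add: matrix_vector_mult_diff_rdistrib)
  also have "(A - \<pi> x) *v y = 0" using x y by (simp add: ann_vec_def)
  finally show "A *v y = \<pi> x *v y" by simp
  have "twisted_apply p B x = twisted_apply p (B - \<pi> y) x + twisted_apply p (\<pi> y) x"
    by (simp add: twisted_apply_add[symmetric])
  also have "twisted_apply p (B - \<pi> y) x = 0" using x y D_mproj by (intro twisted_apply_eq_0)
  finally show "twisted_apply p B x = - (\<pi> x *v y)" by (simp add: twisted_apply_\<pi>)
qed

lemma gsubspace_E_L: "gsubspace_E p L"
  unfolding gsubspace_E_def
proof (intro conjI allI impI)
  show "(0, 0) \<in> L" using graph_mem_L[OF ann_vec_zero] by simp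
next
  fix A x B y assume "(A, x) \<in> L" "(B, y) \<in> L"
  moreover have "A + B - \<pi> (x + y) = (A - \<pi> x) + (B - \<pi> y)" by (simp add: \<pi>_add algebra_simps)
  ultimately show "(A + B, x + y) \<in> L" unfolding mem_L_iff D_def by (metis ann_vec_add ann_mat_add)
next
  fix c A x assume "(A, x) \<in> L"
  moreover have "mscale c A - \<pi> (c *s x) = mscale c (A - \<pi> x)" by (simp add: \<pi>_scale mscale_diff)
  ultimately show "(mscale c A, c *s x) \<in> L" by (simp add: mem_L_iff ann_vec_scale D_def ann_mat_mscale)
next
  fix d A x assume "(A, x) \<in> L"
  moreover have "mproj p d A - \<pi> (vproj p d x) = mproj p d (A - \<pi> x)" by (simp add: mproj_diff mproj_\<pi>)
  ultimately show "(mproj p d A, vproj p d x) \<in> L"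
    by (simp add: mem_L_iff D_mproj ann_vec_vproj[OF D_mproj])
qed

lemma L_subset_eperp: "L \<subseteq> eperp p L"
  unfolding eperp_def by (force simp: epair_Pair L_pairing_terms)

lemma eperp_subset_L: "eperp p L \<subseteq> L"
proof
  fix e assume e: "e \<in> eperp p L"
  obtain B y where e_eq: "e = (B, y)" by (cases e)
  have perp: "epair p (B, y) (A, x) = 0" if "(A, x) \<in> L" for A x
    using e e_eq that by (simp add: eperp_def)
  have y: "y \<in> ann_vec D"
  proof -
    have "X *v y = 0" if X: "X \<in> D" for X
    proof (rule matrix_vector_mult_eq_0_if_twisted_apply_mproj)
      fix d
      have "(mproj p d X, 0) \<in> L" using D_mproj[OF X] by (simp add: mem_L_iff ann_vec_zero)
      from perp[OF this] show "twisted_apply p (mproj p d X) y = 0" by (simp add: epair_Pair)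
    qed
    thus ?thesis by (simp add: ann_vec_def)
  qed
  have "(B - \<pi> y) *v w = 0" if w: "w \<in> W" for w
  proof -
    have "(\<pi> w, w) \<in> L" using w subset_ann_vec_ann_mat graph_mem_L by (auto simp: D_def)
    from perp[OF this] have "B *v w + twisted_apply p (\<pi> w) y = 0" by (simp add: epair_Pair)
    thus ?thesis by (simp add: twisted_apply_\<pi> matrix_vector_mult_diff_rdistrib)
  qed
  hence "B - \<pi> y \<in> D" by (simp add: D_def ann_mat_def)
  with y show "e \<in> L" by (simp add: e_eq mem_L_iff)
qed

lemma ebracket_L:
  assumes "(A, x) \<in> L" and "(B, y) \<in> L"
  shows "ebracket p (A, x) (B, y) = (scomm p A B, \<pi> x *v y)"
proof -
  have "(1/2::'a) *s (\<pi> x *v y - - (\<pi> x *v y)) = \<pi> x *v y"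
    by (simp add: vec_eq_iff)
  thus ?thesis by (simp add: ebracket_Pair L_pairing_terms[OF assms])
qed

lemma D_mult_left: "Y \<in> D \<Longrightarrow> M ** Y \<in> D"
  by (simp add: D_def ann_mat_mult_left)

lemma mult_\<pi>_mem_D:
  assumes \<pi>_closed: "\<forall>x\<in>ann_vec D. \<forall>y\<in>ann_vec D. \<pi> x *v y \<in> ann_vec D"
    and X: "X \<in> D" and z: "z \<in> ann_vec D"
  shows "X ** \<pi> z \<in> D"
proof -
  have "(X ** \<pi> z) *v w = 0" if w: "w \<in> W" for w
  proof -
    have "\<pi> z *v w \<in> ann_vec D"
      using \<pi>_closed z w subset_ann_vec_ann_mat by (auto simp: D_def)
    thus ?thesis using X by (simp add: matrix_vector_mul_assoc[symmetric] ann_vec_def)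
  qed
  thus ?thesis by (simp add: D_def ann_mat_def)
qed

lemma scomm_mem_D_if_closed:
  assumes \<pi>_closed: "\<forall>x\<in>ann_vec D. \<forall>y\<in>ann_vec D. \<pi> x *v y \<in> ann_vec D"
    and X: "X \<in> D" and y: "y \<in> ann_vec D"
  shows "scomm p X (\<pi> y) \<in> D" and "scomm p (\<pi> y) X \<in> D"
proof -
  have "mproj p d X ** mproj p e (\<pi> y) \<in> D" for d e
    using mult_\<pi>_mem_D[OF \<pi>_closed D_mproj[OF X] ann_vec_vproj[OF D_mproj y]] by (simp add: mproj_\<pi>)
  moreover have "mproj p e (\<pi> y) ** mproj p d X \<in> D" for d e
    using X by (intro D_mult_left D_mproj)
  ultimately show "scomm p X (\<pi> y) \<in> D" and "scomm p (\<pi> y) X \<in> D"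
    by (auto simp: D_def intro: scomm_mem_ann_mat)
qed

lemma ebracket_mem_L:
  assumes \<pi>_bracket: "\<forall>x\<in>ann_vec D. \<forall>y\<in>ann_vec D. \<pi> (\<pi> x *v y) - scomm p (\<pi> x) (\<pi> y) \<in> D"
    and \<pi>_closed: "\<forall>x\<in>ann_vec D. \<forall>y\<in>ann_vec D. \<pi> x *v y \<in> ann_vec D"
    and "e \<in> L" and "f \<in> L"
  shows "ebracket p e f \<in> L"
proof -
  obtain X x where e: "e = (X + \<pi> x, x)" and X: "X \<in> D" and x: "x \<in> ann_vec D"
    using \<open>e \<in> L\<close> by (auto simp: L_def)
  obtain Y y where f: "f = (Y + \<pi> y, y)" and Y: "Y \<in> D" and y: "y \<in> ann_vec D"
    using \<open>f \<in> L\<close> by (auto simp: L_def)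
  have "scomm p X Y \<in> D"
    using X Y by (intro scomm_mem_ann_mat[where W = W, folded D_def] D_mult_left D_mproj)
  moreover have "scomm p X (\<pi> y) \<in> D" and "scomm p (\<pi> x) Y \<in> D"
    using scomm_mem_D_if_closed[OF \<pi>_closed] X Y x y by blast+
  moreover have "\<pi> (\<pi> x *v y) - scomm p (\<pi> x) (\<pi> y) \<in> D"
    using \<pi>_bracket x y by blast
  moreover have "scomm p (X + \<pi> x) (Y + \<pi> y) - \<pi> (\<pi> x *v y) =
      scomm p X Y + scomm p X (\<pi> y) + scomm p (\<pi> x) Y - (\<pi> (\<pi> x *v y) - scomm p (\<pi> x) (\<pi> y))"
    by (simp add: scomm_add_left scomm_add_right algebra_simps)
  ultimately have "scomm p (X + \<pi> x) (Y + \<pi> y) - \<pi> (\<pi> x *v y) \<in> D"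
    unfolding D_def by (metis ann_mat_add ann_mat_diff)
  moreover have "\<pi> x *v y \<in> ann_vec D" using \<pi>_closed x y by blast
  ultimately show ?thesis
    using \<open>e \<in> L\<close> \<open>f \<in> L\<close> by (simp add: e f ebracket_L mem_L_iff)
qed

lemma ebracket_closed_iff:
  "(\<forall>e\<in>L. \<forall>f\<in>L. ebracket p e f \<in> L) \<longleftrightarrow>
     (\<forall>x\<in>ann_vec D. \<forall>y\<in>ann_vec D. \<pi> (\<pi> x *v y) - scomm p (\<pi> x) (\<pi> y) \<in> D)
   \<and> (\<forall>x\<in>ann_vec D. \<forall>y\<in>ann_vec D. \<pi> x *v y \<in> ann_vec D)"
proof (intro iffI conjI ballI)
  fix x y assume closed: "\<forall>e\<in>L. \<forall>f\<in>L. ebracket p e f \<in> L" and "x \<in> ann_vec D" "y \<in> ann_vec D"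
  hence "(scomm p (\<pi> x) (\<pi> y), \<pi> x *v y) \<in> L"
    using graph_mem_L ebracket_L by metis
  hence "\<pi> x *v y \<in> ann_vec D" and "scomm p (\<pi> x) (\<pi> y) - \<pi> (\<pi> x *v y) \<in> D"
    by (simp_all add: mem_L_iff)
  thus "\<pi> x *v y \<in> ann_vec D" and "\<pi> (\<pi> x *v y) - scomm p (\<pi> x) (\<pi> y) \<in> D"
    using ann_mat_uminus by (force simp: D_def)+
qed (use ebracket_mem_L in blast)

end

theorem mainTheorem5:
  fixes p :: "'n::finite \<Rightarrow> bool"
    and W :: "('a::field_char_0^'n) set"
    and \<pi> :: "'a^'n \<Rightarrow> 'a^'n^'n"
    and D :: "('a^'n^'n) set"
    and L :: "('a, 'n) E set"
  assumes W_graded: "gsubspace_v p W"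
    and \<pi>_add: "\<And>x y. \<pi> (x + y) = \<pi> x + \<pi> y"
    and \<pi>_scale: "\<And>c x. \<pi> (c *s x) = mscale c (\<pi> x)"
    and \<pi>_even: "\<And>d x. hvec p d x \<Longrightarrow> hmat p d (\<pi> x)"
    and \<pi>_skew: "\<And>d e x y. hvec p d x \<Longrightarrow> hvec p e y \<Longrightarrow>
                   \<pi> x *v y = - (ssign d e *s (\<pi> y *v x))"
    and D_def: "D = ann_mat W"
    and L_def: "L = {(X + \<pi> x, x) | X x. X \<in> D \<and> x \<in> ann_vec D}"
  shows "dirac p L \<longleftrightarrow>
           lie_subsuperalg p D
         \<and> (\<forall>x\<in>ann_vec D. \<forall>y\<in>ann_vec D. \<pi> (\<pi> x *v y) - scomm p (\<pi> x) (\<pi> y) \<in> D)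
         \<and> (\<forall>x\<in>ann_vec D. \<forall>y\<in>ann_vec D. \<pi> x *v y \<in> ann_vec D)"
proof -
  interpret twisted_graph p \<pi> W D L
    by (unfold_locales; (rule assms)?) (use W_graded in \<open>auto simp: gsubspace_v_def\<close>)
  have "dirac p L \<longleftrightarrow> (\<forall>e\<in>L. \<forall>f\<in>L. ebracket p e f \<in> L)"
    unfolding dirac_def using gsubspace_E_L L_subset_eperp eperp_subset_L by blast
  moreover have "lie_subsuperalg p D"
    using W_vproj by (simp add: D_def lie_subsuperalg_ann_mat)
  ultimately show ?thesis
    using ebracket_closed_iff by blast
qed

end
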